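(* For any time warps $f,g,h$: (a) $f\backslash(g\wedge h)=(f\backslash g)\wedge(f\backslash h)$; (b) $(g\wedge h)\backslash f=(g\backslash f)\vee(h\backslash f)$; (c) $f\backslash(g\vee h)=(f\backslash g)\vee(f\backslash h)$; (d) $(g\vee h)\backslash f=(g\backslash f)\wedge(h\backslash f)$; (e) $(g\wedge h)/f=(g/f)\wedge(h/f)$; (f) $f/(g\wedge h)=(f/g)\vee(f/h)$; (g) $(g\vee h)/f=(g/f)\vee(h/f)$; (h) $f/(g\vee h)=(f/g)\wedge(f/h)$.
   Context: Let $\overline{\omega}=\omega\cup\{\omega\}$ be the natural numbers with a top element $\omega$ adjoined, with its natural total order. A time warp is a monotone map $f\colon\overline{\omega}\to\overline{\omega}$ with $f(0)=0$ and $f(\omega)=\bigvee\{f(n)\mid n\in\omega\}$. The set $W$ of time warps is ordered pointwise, with $\wedge,\vee$ the pointwise meet and join, and $fg:=f\circ g$. The residuals $\backslash,/$ are the binary operations on $W$ satisfying, for all $f,g,h\in W$: $f\le h/g \iff fg\le h \iff g\le f\backslash h$. *)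

theory Defs
  imports Main "HOL-Library.Extended_Nat"
begin

text \<open>The chain omega-bar = omega with a top adjoined is modelled by enat
  (with infinity as the top element omega).  Functions are ordered pointwise
  (le_fun), inf/sup on functions are pointwise meet/join, and the monoid
  product fg is composition f o g.\<close>

definition time_warps :: "(enat \<Rightarrow> enat) set" where
  "time_warps = {f. mono f \<and> f 0 = 0 \<and> f \<infinity> = (SUP n. f (enat n))}"

text \<open>Right residual h/g: the (unique) greatest time warp f with f o g \<le> h,
  i.e. the operation with  f \<le> h/g \<longleftrightarrow> f o g \<le> h  for all time warps f.\<close>
definition rres :: "(enat \<Rightarrow> enat) \<Rightarrow> (enat \<Rightarrow> enat) \<Rightarrow> (enat \<Rightarrow> enat)" where
  "rres h g = (GREATEST f. f \<in> time_warps \<and> f \<circ> g \<le> h)"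

text \<open>Left residual f\h: the greatest time warp g with f o g \<le> h.\<close>
definition lres :: "(enat \<Rightarrow> enat) \<Rightarrow> (enat \<Rightarrow> enat) \<Rightarrow> (enat \<Rightarrow> enat)" where
  "lres f h = (GREATEST g. g \<in> time_warps \<and> f \<circ> g \<le> h)"

end

theory Submission
  imports Defs
begin

text \<open>Residuals exist because time warps are closed under arbitrary pointwise joins and, as
  join-preserving maps of the complete chain \<open>enat\<close>, commute with them; the residual is the
  join of all candidates.  Testing the residuals against the step warps that jump from 0 to
  \<open>c\<close> at \<open>n\<close> computes them pointwise at every finite \<open>n > 0\<close>:
  \<open>c \<le> (f\h)(n)\<close> iff \<open>f c \<le> h n\<close>, and \<open>c \<le> (h/g)(n)\<close> iff \<open>c \<le> h x\<close> whenever \<open>n \<le> g x\<close>.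
  A time warp is determined by these values, so each identity becomes an elementary statement
  about the chain \<open>enat\<close>.  For (b), (c), (f) and (g) this statement uses linearity: a minimum
  or maximum is one of its arguments, and the up-sets of a chain are nested.\<close>

lemma time_warp_mono: "f \<in> time_warps \<Longrightarrow> mono f"
  by (simp add: time_warps_def)

lemma time_warp_zero: "f \<in> time_warps \<Longrightarrow> f 0 = 0"
  by (simp add: time_warps_def)

lemma time_warp_infinity: "f \<in> time_warps \<Longrightarrow> f \<infinity> = (SUP n. f (enat n))"
  by (simp add: time_warps_def)

lemma time_warp_less_infinityD: "f \<in> time_warps \<Longrightarrow> c < f \<infinity> \<Longrightarrow> \<exists>n. c < f (enat n)"
  by (simp add: time_warp_infinity less_SUP_iff)

lemma time_warpsI:
  assumes "mono f" and "f 0 = 0" and "\<And>c. c < f \<infinity> \<Longrightarrow> \<exists>n. c < f (enat n)"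
  shows "f \<in> time_warps"
proof -
  have "(SUP n. f (enat n)) \<le> f \<infinity>"
    by (intro SUP_least monoD[OF \<open>mono f\<close>]) simp
  moreover have "f \<infinity> \<le> (SUP n. f (enat n))"
  proof (rule ccontr)
    assume "\<not> ?thesis"
    then obtain n where "(SUP n. f (enat n)) < f (enat n)"
      using assms(3) by (meson not_le)
    then show False
      using SUP_upper[OF UNIV_I, of "\<lambda>n. f (enat n)" n] by (simp add: leD)
  qed
  ultimately show ?thesis
    using assms(1,2) by (simp add: time_warps_def antisym)
qed

lemma time_warps_Sup: "S \<subseteq> time_warps \<Longrightarrow> Sup S \<in> time_warps"
proof (rule time_warpsI)
  assume S: "S \<subseteq> time_warps"
  then show "mono (Sup S)"
    unfolding mono_def Sup_apply by (intro allI impI SUP_mono) (meson monoD subsetD time_warp_mono)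
  show "Sup S 0 = 0"
    using S by (auto simp: time_warp_zero intro!: antisym SUP_least)
  fix c assume "c < Sup S \<infinity>"
  then obtain f where "f \<in> S" "c < f \<infinity>"
    by (auto simp: less_SUP_iff)
  moreover from this obtain n where "c < f (enat n)"
    using S time_warp_less_infinityD by blast
  ultimately show "\<exists>n. c < Sup S (enat n)"
    by (auto simp: less_SUP_iff)
qed

lemma time_warps_inf:
  assumes g: "g \<in> time_warps" and h: "h \<in> time_warps"
  shows "inf g h \<in> time_warps"
proof (rule time_warpsI)
  show "mono (inf g h)"
    using time_warp_mono[OF g] time_warp_mono[OF h] by (auto simp: mono_def le_infI1 le_infI2)
  show "inf g h 0 = 0"
    using g h by (simp add: time_warp_zero)
  fix c assume "c < inf g h \<infinity>"
  then have "c < g \<infinity>" "c < h \<infinity>"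
    by (simp_all add: inf_min)
  then obtain n1 n2 where "c < g (enat n1)" "c < h (enat n2)"
    using g h time_warp_less_infinityD by meson
  moreover have "g (enat n1) \<le> g (enat (max n1 n2))" "h (enat n2) \<le> h (enat (max n1 n2))"
    using time_warp_mono[OF g] time_warp_mono[OF h] by (auto intro: monoD)
  ultimately have "c < inf g h (enat (max n1 n2))"
    by (auto simp: inf_min intro: less_le_trans)
  then show "\<exists>n. c < inf g h (enat n)" ..
qed

lemma time_warps_sup:
  assumes g: "g \<in> time_warps" and h: "h \<in> time_warps"
  shows "sup g h \<in> time_warps"
proof (rule time_warpsI)
  show "mono (sup g h)"
    using time_warp_mono[OF g] time_warp_mono[OF h] by (auto simp: mono_def le_supI1 le_supI2)
  show "sup g h 0 = 0"
    using g h by (simp add: time_warp_zero)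
  fix c assume "c < sup g h \<infinity>"
  then have "c < g \<infinity> \<or> c < h \<infinity>"
    by (simp add: sup_max less_max_iff_disj)
  then obtain n where "c < g (enat n) \<or> c < h (enat n)"
    using g h time_warp_less_infinityD by meson
  then have "c < sup g h (enat n)"
    by (auto simp: sup_max less_max_iff_disj)
  then show "\<exists>n. c < sup g h (enat n)" ..
qed

lemma time_warp_Sup_le:
  assumes f: "f \<in> time_warps"
  shows "f (Sup A) \<le> (SUP a\<in>A. f a)"
proof (cases "finite A")
  case True
  show ?thesis
  proof (cases "A = {}")
    case True
    then show ?thesis
      using time_warp_zero[OF f] by (simp add: bot_enat_def)
  next
    case False
    then have "Sup A \<in> A"
      using \<open>finite A\<close> by (simp add: Sup_enat_def)
    then show ?thesis
      by (rule SUP_upper)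
  qed
next
  case False
  have "f (enat n) \<le> (SUP a\<in>A. f a)" for n
  proof -
    obtain a where "a \<in> A" "enat n \<le> a"
      using False finite_enat_bounded[of A n] by (meson nle_le)
    then show ?thesis
      using time_warp_mono[OF f] by (meson SUP_upper2 monoD)
  qed
  then have "f \<infinity> \<le> (SUP a\<in>A. f a)"
    unfolding time_warp_infinity[OF f] by (rule SUP_least)
  moreover have "Sup A = \<infinity>"
    using False by (auto simp: Sup_enat_def)
  ultimately show ?thesis
    by simp
qed

lemma Greatest_time_warp:
  assumes "P (Sup {k \<in> time_warps. P k})"
  defines "G \<equiv> GREATEST k. k \<in> time_warps \<and> P k"
  shows "G \<in> time_warps" and "P G" and "\<And>k. k \<in> time_warps \<Longrightarrow> P k \<Longrightarrow> k \<le> G"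
proof -
  have "G = Sup {k \<in> time_warps. P k}"
    unfolding G_def
    by (rule Greatest_equality) (use assms(1) time_warps_Sup in \<open>auto intro: Sup_upper\<close>)
  then show "G \<in> time_warps" and "P G" and "\<And>k. k \<in> time_warps \<Longrightarrow> P k \<Longrightarrow> k \<le> G"
    using assms(1) time_warps_Sup by (auto intro: Sup_upper)
qed

lemma time_warp_comp_Sup_le:
  assumes f: "f \<in> time_warps"
  shows "f \<circ> Sup {k \<in> time_warps. f \<circ> k \<le> h} \<le> h"
proof (rule le_funI)
  fix x
  let ?S = "{k \<in> time_warps. f \<circ> k \<le> h}"
  have "(f \<circ> Sup ?S) x = f (Sup ((\<lambda>k. k x) ` ?S))"
    by simp
  also have "\<dots> \<le> (SUP y\<in>(\<lambda>k. k x) ` ?S. f y)"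
    by (rule time_warp_Sup_le[OF f])
  also have "\<dots> \<le> h x"
    by (auto intro!: SUP_least simp: le_fun_def)
  finally show "(f \<circ> Sup ?S) x \<le> h x" .
qed

lemma Sup_time_warps_comp_le: "Sup {k \<in> time_warps. k \<circ> g \<le> h} \<circ> g \<le> h"
  by (auto intro!: le_funI SUP_least simp: le_fun_def)

lemma
  assumes f: "f \<in> time_warps"
  shows lres_time_warp: "lres f h \<in> time_warps"
    and lres_comp_le: "f \<circ> lres f h \<le> h"
    and lres_greatest: "k \<in> time_warps \<Longrightarrow> f \<circ> k \<le> h \<Longrightarrow> k \<le> lres f h"
  using Greatest_time_warp[where P = "\<lambda>k. f \<circ> k \<le> h", OF time_warp_comp_Sup_le[OF f]]
  unfolding lres_def by blast+

lemma
  shows rres_time_warp: "rres h g \<in> time_warps"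
    and rres_comp_le: "rres h g \<circ> g \<le> h"
    and rres_greatest: "k \<in> time_warps \<Longrightarrow> k \<circ> g \<le> h \<Longrightarrow> k \<le> rres h g"
  using Greatest_time_warp[where P = "\<lambda>k. k \<circ> g \<le> h", OF Sup_time_warps_comp_le]
  unfolding rres_def by blast+

definition step_warp :: "nat \<Rightarrow> enat \<Rightarrow> enat \<Rightarrow> enat" where
  "step_warp n c = (\<lambda>y. if y < enat n then 0 else c)"

lemma step_warp_time_warp: "0 < n \<Longrightarrow> step_warp n c \<in> time_warps"
  by (rule time_warpsI) (auto simp: mono_def step_warp_def enat_0_iff intro: exI[of _ n])

lemma step_warp_at: "step_warp n c (enat n) = c"
  by (simp add: step_warp_def)

lemma le_lres_iff:
  assumes f: "f \<in> time_warps" and h: "mono h" and n: "0 < n"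
  shows "c \<le> lres f h (enat n) \<longleftrightarrow> f c \<le> h (enat n)"
proof
  assume "c \<le> lres f h (enat n)"
  then have "f c \<le> f (lres f h (enat n))"
    by (rule monoD[OF time_warp_mono[OF f]])
  also have "\<dots> \<le> h (enat n)"
    using lres_comp_le[OF f] by (simp add: le_fun_def)
  finally show "f c \<le> h (enat n)" .
next
  assume fc: "f c \<le> h (enat n)"
  have "f \<circ> step_warp n c \<le> h"
  proof (rule le_funI)
    fix y
    show "(f \<circ> step_warp n c) y \<le> h y"
      using fc monoD[OF h, of "enat n" y] time_warp_zero[OF f]
      by (auto simp: step_warp_def not_less)
  qed
  then have "step_warp n c \<le> lres f h"
    by (rule lres_greatest[OF f step_warp_time_warp[OF n]])
  then show "c \<le> lres f h (enat n)"
    by (metis le_funD step_warp_at)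
qed

lemma le_rres_iff:
  assumes n: "0 < n"
  shows "c \<le> rres h g (enat n) \<longleftrightarrow> (\<forall>x. enat n \<le> g x \<longrightarrow> c \<le> h x)"
proof (intro iffI allI impI)
  fix x assume "c \<le> rres h g (enat n)" and "enat n \<le> g x"
  then have "c \<le> rres h g (g x)"
    using time_warp_mono[OF rres_time_warp] by (meson monoD order_trans)
  also have "\<dots> \<le> h x"
    using rres_comp_le by (simp add: le_fun_def)
  finally show "c \<le> h x" .
next
  assume "\<forall>x. enat n \<le> g x \<longrightarrow> c \<le> h x"
  then have "step_warp n c \<circ> g \<le> h"
    by (auto simp: le_fun_def step_warp_def not_less)
  then have "step_warp n c \<le> rres h g"
    by (rule rres_greatest[OF step_warp_time_warp[OF n]])
  then show "c \<le> rres h g (enat n)"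
    by (metis le_funD step_warp_at)
qed

lemma time_warp_eqI:
  assumes f: "f \<in> time_warps" and g: "g \<in> time_warps"
    and le_iff: "\<And>n c. 0 < n \<Longrightarrow> c \<le> f (enat n) \<longleftrightarrow> c \<le> g (enat n)"
  shows "f = g"
proof -
  have fin: "f (enat n) = g (enat n)" for n
  proof (cases "n = 0")
    case True
    then show ?thesis
      using time_warp_zero[OF f] time_warp_zero[OF g] by (simp add: zero_enat_def)
  next
    case False
    then show ?thesis
      using le_iff[of n] by (meson antisym order_refl not_gr0)
  qed
  show "f = g"
  proof
    fix x
    show "f x = g x"
      using fin by (cases x) (simp_all add: time_warp_infinity[OF f] time_warp_infinity[OF g])
  qed
qed

lemma all_le_disj_iff_mono:
  fixes g h :: "'a::linorder \<Rightarrow> 'b::order"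
  assumes "mono g" and "mono h"
  shows "(\<forall>x. P x \<longrightarrow> c \<le> g x \<or> c \<le> h x) \<longleftrightarrow> (\<forall>x. P x \<longrightarrow> c \<le> g x) \<or> (\<forall>x. P x \<longrightarrow> c \<le> h x)"
proof (rule iffI, rule ccontr)
  assume all: "\<forall>x. P x \<longrightarrow> c \<le> g x \<or> c \<le> h x"
    and "\<not> ((\<forall>x. P x \<longrightarrow> c \<le> g x) \<or> (\<forall>x. P x \<longrightarrow> c \<le> h x))"
  then obtain x1 x2 where x1: "P x1" "\<not> c \<le> g x1" and x2: "P x2" "\<not> c \<le> h x2"
    by blast
  have "P (min x1 x2)"
    using x1 x2 by (simp add: min_def)
  moreover have "\<not> c \<le> g (min x1 x2)" "\<not> c \<le> h (min x1 x2)"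
    using x1(2) x2(2) monoD[OF assms(1), of "min x1 x2" x1] monoD[OF assms(2), of "min x1 x2" x2]
    by (auto dest: order_trans)
  ultimately show False
    using all by blast
qed auto

lemma all_conj_le_imp_iff_mono:
  fixes g h :: "'a::linorder \<Rightarrow> 'b::order"
  assumes "mono g" and "mono h"
  shows "(\<forall>x. a \<le> g x \<and> a \<le> h x \<longrightarrow> P x) \<longleftrightarrow> (\<forall>x. a \<le> g x \<longrightarrow> P x) \<or> (\<forall>x. a \<le> h x \<longrightarrow> P x)"
proof (rule iffI, rule ccontr)
  assume all: "\<forall>x. a \<le> g x \<and> a \<le> h x \<longrightarrow> P x"
    and "\<not> ((\<forall>x. a \<le> g x \<longrightarrow> P x) \<or> (\<forall>x. a \<le> h x \<longrightarrow> P x))"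
  then obtain x1 x2 where x1: "a \<le> g x1" "\<not> P x1" and x2: "a \<le> h x2" "\<not> P x2"
    by blast
  have "\<not> P (max x1 x2)"
    using x1 x2 by (simp add: max_def)
  moreover have "a \<le> g (max x1 x2)" "a \<le> h (max x1 x2)"
    using x1(1) x2(1) monoD[OF assms(1), of x1 "max x1 x2"] monoD[OF assms(2), of x2 "max x1 x2"]
    by auto
  ultimately show False
    using all by blast
qed auto

lemma lres_inf_right:
  assumes "f \<in> time_warps" and "g \<in> time_warps" and "h \<in> time_warps"
  shows "lres f (inf g h) = inf (lres f g) (lres f h)"
  by (rule time_warp_eqI)
    (use assms in \<open>auto simp: le_lres_iff time_warp_mono time_warps_inf lres_time_warp\<close>)

lemma lres_inf_left:
  assumes "f \<in> time_warps" and "g \<in> time_warps" and "h \<in> time_warps"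
  shows "lres (inf g h) f = sup (lres g f) (lres h f)"
  by (rule time_warp_eqI)
    (use assms in \<open>auto simp: le_lres_iff time_warp_mono time_warps_inf time_warps_sup lres_time_warp
      sup_max inf_min le_max_iff_disj min_le_iff_disj\<close>)

lemma lres_sup_right:
  assumes "f \<in> time_warps" and "g \<in> time_warps" and "h \<in> time_warps"
  shows "lres f (sup g h) = sup (lres f g) (lres f h)"
  by (rule time_warp_eqI)
    (use assms in \<open>auto simp: le_lres_iff time_warp_mono time_warps_sup lres_time_warp
      sup_max le_max_iff_disj\<close>)

lemma lres_sup_left:
  assumes "f \<in> time_warps" and "g \<in> time_warps" and "h \<in> time_warps"
  shows "lres (sup g h) f = inf (lres g f) (lres h f)"
  by (rule time_warp_eqI)
    (use assms in \<open>auto simp: le_lres_iff time_warp_mono time_warps_inf time_warps_sup lres_time_warp\<close>)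

lemma rres_inf_left: "rres (inf g h) f = inf (rres g f) (rres h f)"
  by (rule time_warp_eqI) (auto simp: le_rres_iff rres_time_warp time_warps_inf)

lemma rres_inf_right:
  assumes "mono g" and "mono h"
  shows "rres f (inf g h) = sup (rres f g) (rres f h)"
  by (rule time_warp_eqI)
    (simp_all add: le_rres_iff rres_time_warp time_warps_sup sup_max le_max_iff_disj
      all_conj_le_imp_iff_mono[OF assms])

lemma rres_sup_left:
  assumes "mono g" and "mono h"
  shows "rres (sup g h) f = sup (rres g f) (rres h f)"
  by (rule time_warp_eqI)
    (simp_all add: le_rres_iff rres_time_warp time_warps_sup sup_max le_max_iff_disj
      all_le_disj_iff_mono[OF assms])

lemma rres_sup_right: "rres f (sup g h) = inf (rres f g) (rres f h)"
  by (rule time_warp_eqI) (auto simp: le_rres_iff rres_time_warp time_warps_inf sup_max le_max_iff_disj)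

theorem lemma2p2:
  fixes f g h :: "enat \<Rightarrow> enat"
  assumes "f \<in> time_warps" and "g \<in> time_warps" and "h \<in> time_warps"
  shows "(lres f (inf g h) = inf (lres f g) (lres f h))
    \<and> (lres (inf g h) f = sup (lres g f) (lres h f))
    \<and> (lres f (sup g h) = sup (lres f g) (lres f h))
    \<and> (lres (sup g h) f = inf (lres g f) (lres h f))
    \<and> (rres (inf g h) f = inf (rres g f) (rres h f))
    \<and> (rres f (inf g h) = sup (rres f g) (rres f h))
    \<and> (rres (sup g h) f = sup (rres g f) (rres h f))
    \<and> (rres f (sup g h) = inf (rres f g) (rres f h))"
  using assms time_warp_mono
  by (simp add: lres_inf_right lres_inf_left lres_sup_right lres_sup_left
      rres_inf_left rres_inf_right rres_sup_left rres_sup_right)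

end
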